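(* Let $G\subset \mathrm{SL}(3,\mathbb{C})$ be a finite abelian group of diagonal matrices. Then $$|G| = 1 + 2 j_G + \sum_{i=1}^3 (n_i - 1).$$
   Context: Each $g\in G$ of order $r$ is uniquely written $g=\mathrm{diag}(e^{2\pi\sqrt{-1}a_1/r},e^{2\pi\sqrt{-1}a_2/r},e^{2\pi\sqrt{-1}a_3/r})$ with integers $0\le a_i<r$. Its age is $\mathrm{age}(g)=\frac1r\sum_{i=1}^3 a_i$, which is an integer since $G\subset\mathrm{SL}(3,\mathbb{C})$. $N_g$ denotes the dimension of the fixed subspace of $g$ in $\mathbb{C}^3$. $j_G$ is the number of $g\in G$ with $\mathrm{age}(g)=1$ and $N_g=0$. For $i=1,2,3$, $K_i$ is the maximal subgroup of $G$ fixing the $i$-th coordinate $x_i$ (i.e. elements whose $i$-th diagonal entry is $1$), and $n_i=|K_i|$. *)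

theory Defs
  imports "HOL-Analysis.Analysis"
begin

definition is_diag3 :: "complex^3^3 \<Rightarrow> bool" where
  "is_diag3 g \<longleftrightarrow> (\<forall>i j. i \<noteq> j \<longrightarrow> g $ i $ j = 0)"

definition finite_diag_SL3_group :: "(complex^3^3) set \<Rightarrow> bool" where
  "finite_diag_SL3_group G \<longleftrightarrow>
     finite G \<and> mat 1 \<in> G \<and>
     (\<forall>g\<in>G. is_diag3 g \<and> det g = 1) \<and>
     (\<forall>g\<in>G. \<forall>h\<in>G. g ** h \<in> G) \<and>
     (\<forall>g\<in>G. matrix_inv g \<in> G)"

definition diag_order :: "complex^3^3 \<Rightarrow> nat" where
  "diag_order g = (LEAST r. 0 < r \<and> (\<forall>i. (g $ i $ i) ^ r = 1))"

definition diag_exponent :: "complex^3^3 \<Rightarrow> 3 \<Rightarrow> nat" where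
  "diag_exponent g i = (THE a. a < diag_order g \<and>
      g $ i $ i = exp (2 * of_real pi * \<i> * of_nat a / of_nat (diag_order g)))"

definition age :: "complex^3^3 \<Rightarrow> real" where
  "age g = (\<Sum>i\<in>UNIV. real (diag_exponent g i)) / real (diag_order g)"

text \<open>Dimension of the fixed subspace of a diagonal matrix = number of diagonal entries equal to 1.\<close>
definition fixdim :: "complex^3^3 \<Rightarrow> nat" where
  "fixdim g = card {i. g $ i $ i = 1}"

definition j_G :: "(complex^3^3) set \<Rightarrow> nat" where
  "j_G G = card {g\<in>G. age g = 1 \<and> fixdim g = 0}"

definition K_sub :: "(complex^3^3) set \<Rightarrow> 3 \<Rightarrow> (complex^3^3) set" where
  "K_sub G i = {g\<in>G. g $ i $ i = 1}"

end

(* Since det g = 1, an element of G fixing two coordinates fixes the third, so the sets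
   K_i - {1} are pairwise disjoint and G is the disjoint union of {1}, the K_i - {1} and the set F
   of elements without fixed coordinates.  For g in F all exponents a_i lie strictly between 0
   and r and their sum is divisible by r, so age g is 1 or 2; inversion replaces each a_i by
   r - a_i, hence age (g^-1) = 3 - age g and inversion exchanges the elements of F of age 1 with
   those of age 2.  Therefore |F| = 2 j_G. *)
theory Submission
  imports Defs
begin

lemma matrix_mult_diagonal_right:
  fixes A :: "'a::semiring_1^'n^'n"
  assumes "\<And>i j. i \<noteq> j \<Longrightarrow> A$i$j = 0"
  shows "(M ** A)$i$j = M$i$j * A$j$j"
proof -
  have "(M ** A)$i$j = (\<Sum>k\<in>UNIV. M$i$k * A$k$j)" by (simp add: matrix_matrix_mult_def)
  also have "\<dots> = (\<Sum>k\<in>UNIV. if k = j then M$i$j * A$j$j else 0)"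
    by (rule sum.cong) (use assms in auto)
  finally show ?thesis by simp
qed

lemma diagonal_matrix_eqI:
  fixes A B :: "'a::zero^'n^'n"
  assumes "\<And>i j. i \<noteq> j \<Longrightarrow> A$i$j = 0" "\<And>i j. i \<noteq> j \<Longrightarrow> B$i$j = 0"
    and "\<And>i. A$i$i = B$i$i"
  shows "A = B"
  using assms by (metis vec_eq_iff)

lemma matrix_inv_left:
  fixes A :: "'a::semiring_1^'n^'m"
  assumes "invertible A"
  shows "matrix_inv A ** A = mat 1"
proof -
  have "\<exists>A'. A ** A' = mat 1 \<and> A' ** A = mat 1" using assms unfolding invertible_def .
  then show ?thesis unfolding matrix_inv_def by (rule someI_ex[THEN conjunct2])
qed

lemma finite_powers_imp_roots_of_unity:
  fixes z :: "'i \<Rightarrow> 'a::field"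
  assumes "finite (range (\<lambda>n i. z i ^ n))" and "\<And>i. z i \<noteq> 0"
  shows "\<exists>r>0. \<forall>i. z i ^ r = 1"
proof -
  have "\<not> inj (\<lambda>n i. z i ^ n)"
    using assms(1) finite_imageD infinite_UNIV_nat by blast
  then obtain a b where "a < b" and ab: "\<And>i. z i ^ a = z i ^ b"
    unfolding inj_def by (metis linorder_neqE_nat)
  have "z i ^ (b - a) = 1" for i
  proof -
    have "z i ^ a * z i ^ (b - a) = z i ^ b" using \<open>a < b\<close> by (simp flip: power_add)
    then have "z i ^ a * z i ^ (b - a) = z i ^ a * 1" using ab[of i] by simp
    then show ?thesis using assms(2) by simp
  qed
  then show ?thesis using \<open>a < b\<close> by (intro exI[of _ "b - a"]) simp
qed

definition unity_root_exponent :: "nat \<Rightarrow> complex \<Rightarrow> nat" where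
  "unity_root_exponent r z =
     (THE a. a < r \<and> z = exp (2 * of_real pi * \<i> * of_nat a / of_nat r))"

lemma unity_root_exponent_unique:
  assumes "0 < r" "z ^ r = 1"
  shows "\<exists>!a. a < r \<and> z = exp (2 * of_real pi * \<i> * of_nat a / of_nat r)"
proof -
  have "z \<in> {z. z ^ r = 1}" using assms(2) by simp
  then have "z \<in> {exp (2 * of_real pi * \<i> * of_nat j / of_nat r) | j. j < r}"
    using complex_roots_unity[of r] assms(1) by simp
  then obtain a where a: "a < r" "z = exp (2 * of_real pi * \<i> * of_nat a / of_nat r)"
    by blast
  moreover have "b = a" if "b < r" "z = exp (2 * of_real pi * \<i> * of_nat b / of_nat r)" for b
    using that a complex_root_unity_eq[of r b a] assms(1) by simp
  ultimately show ?thesis by blast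
qed

lemma unity_root_exponent:
  assumes "0 < r" "z ^ r = 1"
  shows "unity_root_exponent r z < r"
    and "z = exp (2 * of_real pi * \<i> * of_nat (unity_root_exponent r z) / of_nat r)"
proof -
  have "unity_root_exponent r z < r \<and>
      z = exp (2 * of_real pi * \<i> * of_nat (unity_root_exponent r z) / of_nat r)"
    unfolding unity_root_exponent_def by (rule theI'[OF unity_root_exponent_unique[OF assms]])
  then show "unity_root_exponent r z < r"
    and "z = exp (2 * of_real pi * \<i> * of_nat (unity_root_exponent r z) / of_nat r)"
    by blast+
qed

lemma unity_root_exponent_eqI:
  assumes "0 < r" "a < r" "z = exp (2 * of_real pi * \<i> * of_nat a / of_nat r)"
  shows "unity_root_exponent r z = a"
proof -
  have "z ^ r = 1" using assms(1,3) complex_root_unity by simp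
  then show ?thesis
    unfolding unity_root_exponent_def
    by (rule the1_equality[OF unity_root_exponent_unique[OF assms(1)]]) (use assms in blast)
qed

lemma unity_root_exponent_eq_0_iff:
  assumes "0 < r" "z ^ r = 1"
  shows "unity_root_exponent r z = 0 \<longleftrightarrow> z = 1"
proof
  assume "unity_root_exponent r z = 0"
  then show "z = 1" using unity_root_exponent(2)[OF assms] by simp
next
  assume "z = 1"
  then show "unity_root_exponent r z = 0" using assms(1) by (intro unity_root_exponent_eqI) simp_all
qed

lemma unity_root_exponent_inverse:
  assumes "0 < r" "z ^ r = 1" "z \<noteq> 1"
  shows "unity_root_exponent r (inverse z) = r - unity_root_exponent r z"
proof (rule unity_root_exponent_eqI)
  let ?e = "\<lambda>a. exp (2 * of_real pi * \<i> * of_nat a / of_nat r)"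
  let ?a = "unity_root_exponent r z"
  have "?a \<noteq> 0" using unity_root_exponent_eq_0_iff assms by blast
  then show "0 < r" "r - ?a < r" using assms(1) by simp_all
  have "?a < r" using unity_root_exponent(1)[OF assms(1,2)] .
  have "z * ?e (r - ?a) = ?e (?a + (r - ?a))"
    by (subst unity_root_exponent(2)[OF assms(1,2)])
       (simp only: of_nat_add distrib_left add_divide_distrib exp_add)
  also have "\<dots> = 1" using \<open>?a < r\<close> assms(1) by (simp add: complex_root_unity_eq_1)
  finally show "inverse z = ?e (r - ?a)" by (simp add: inverse_unique)
qed

lemma dvd_sum_unity_root_exponent:
  assumes "finite I" "0 < r" "\<And>i. i \<in> I \<Longrightarrow> z i ^ r = 1" "(\<Prod>i\<in>I. z i) = 1"
  shows "r dvd (\<Sum>i\<in>I. unity_root_exponent r (z i))"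
proof -
  let ?a = "\<lambda>i. unity_root_exponent r (z i)"
  have "exp (2 * of_real pi * \<i> * of_nat (\<Sum>i\<in>I. ?a i) / of_nat r)
      = (\<Prod>i\<in>I. exp (2 * of_real pi * \<i> * of_nat (?a i) / of_nat r))"
    by (simp add: sum_distrib_left sum_divide_distrib exp_sum[OF assms(1)])
  also have "\<dots> = (\<Prod>i\<in>I. z i)"
    using unity_root_exponent(2)[OF assms(2,3)] by (intro prod.cong) auto
  also have "\<dots> = 1" by (rule assms(4))
  finally show ?thesis by (subst (asm) complex_root_unity_eq_1) (use assms(2) in auto)
qed

lemma fixdim_eq_0_iff: "fixdim g = 0 \<longleftrightarrow> (\<forall>i. g$i$i \<noteq> 1)"
  unfolding fixdim_def by auto

lemma UNIV_3_distinct: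
  fixes i j k :: 3
  assumes "i \<noteq> j" "i \<noteq> k" "j \<noteq> k"
  shows "UNIV = {i, j, k}"
  using assms exhaust_3[of i] exhaust_3[of j] exhaust_3[of k] by (auto simp: UNIV_3)

locale diag_SL3 =
  fixes G :: "(complex^3^3) set"
  assumes group: "finite_diag_SL3_group G"
begin

lemma finite: "finite G"
  and one: "mat 1 \<in> G"
  and diagonal: "g \<in> G \<Longrightarrow> i \<noteq> j \<Longrightarrow> g$i$j = 0"
  and det: "g \<in> G \<Longrightarrow> det g = 1"
  and mult: "g \<in> G \<Longrightarrow> h \<in> G \<Longrightarrow> g ** h \<in> G"
  and inv: "g \<in> G \<Longrightarrow> matrix_inv g \<in> G"
  using group by (auto simp: finite_diag_SL3_group_def is_diag3_def)

lemma prod_diagonal: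
  assumes "g \<in> G"
  shows "(\<Prod>i\<in>UNIV. g$i$i) = 1"
proof -
  have "det g = (\<Prod>i\<in>UNIV. g$i$i)" by (rule det_diagonal) (use diagonal assms in auto)
  then show ?thesis using det[OF assms] by simp
qed

lemma diagonal_nonzero:
  assumes "g \<in> G"
  shows "g$i$i \<noteq> 0"
proof -
  have "(\<Prod>i\<in>UNIV. g$i$i) \<noteq> 0" using prod_diagonal[OF assms] by simp
  then show ?thesis by (simp add: prod_zero_iff)
qed

lemma eqI:
  assumes "g \<in> G" "h \<in> G" "\<And>i. g$i$i = h$i$i"
  shows "g = h"
  by (rule diagonal_matrix_eqI) (use assms diagonal in auto)

lemma mult_diagonal:
  assumes "h \<in> G"
  shows "(g ** h)$i$i = g$i$i * h$i$i"
  by (rule matrix_mult_diagonal_right) (use assms diagonal in auto)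

lemma inv_diagonal:
  assumes "g \<in> G"
  shows "(matrix_inv g)$i$i = inverse (g$i$i)"
proof -
  have "invertible g" using det[OF assms] by (simp add: invertible_det_nz)
  then have "(matrix_inv g ** g)$i$i = 1" by (simp add: matrix_inv_left mat_def)
  then have "(matrix_inv g)$i$i * g$i$i = 1" by (simp add: mult_diagonal assms)
  then show ?thesis using diagonal_nonzero[OF assms] by (simp add: field_simps)
qed

lemma inv_inv:
  assumes "g \<in> G"
  shows "matrix_inv (matrix_inv g) = g"
  by (rule eqI) (simp_all add: assms inv inv_diagonal)

lemma powers_diagonal: "g \<in> G \<Longrightarrow> \<exists>h\<in>G. \<forall>i. h$i$i = (g$i$i) ^ n"
proof (induction n)
  case 0
  show ?case by (intro bexI[OF _ one]) (simp add: mat_def)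
next
  case (Suc n)
  then obtain h where "h \<in> G" "\<forall>i. h$i$i = (g$i$i) ^ n" by blast
  then show ?case using Suc.prems by (intro bexI[of _ "h ** g"]) (simp_all add: mult mult_diagonal)
qed

lemma diag_order:
  assumes "g \<in> G"
  shows "0 < diag_order g" and "(g$i$i) ^ diag_order g = 1"
proof -
  have "(\<lambda>i. (g$i$i) ^ n) \<in> (\<lambda>h i. h$i$i) ` G" for n
  proof -
    obtain h where "h \<in> G" "\<forall>i. h$i$i = (g$i$i) ^ n" using powers_diagonal[OF assms] by blast
    then show ?thesis by (intro image_eqI[of _ _ h]) auto
  qed
  then have "range (\<lambda>n i. (g$i$i) ^ n) \<subseteq> (\<lambda>h i. h$i$i) ` G" by blast
  then have "\<exists>r>0. \<forall>i. (g$i$i) ^ r = 1"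
    using finite finite_subset diagonal_nonzero[OF assms]
    by (intro finite_powers_imp_roots_of_unity) auto
  then have "0 < diag_order g \<and> (\<forall>i. (g$i$i) ^ diag_order g = 1)"
    unfolding diag_order_def by (rule LeastI_ex)
  then show "0 < diag_order g" "(g$i$i) ^ diag_order g = 1" by blast+
qed

lemma diag_order_inv: "g \<in> G \<Longrightarrow> diag_order (matrix_inv g) = diag_order g"
  unfolding diag_order_def by (simp add: inv_diagonal power_inverse)

lemma diag_exponent_eq: "diag_exponent g i = unity_root_exponent (diag_order g) (g$i$i)"
  unfolding diag_exponent_def unity_root_exponent_def ..

lemma age_fixed_point_free:
  assumes "g \<in> G" "fixdim g = 0"
  obtains k :: nat where "k = 1 \<or> k = 2" "age g = k" "age (matrix_inv g) = 3 - k"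
proof -
  let ?r = "diag_order g" and ?a = "diag_exponent g"
  have r: "0 < ?r" and root: "\<And>i. (g$i$i) ^ ?r = 1" using diag_order[OF assms(1)] by auto
  have a_pos: "0 < ?a i" and a_less: "?a i < ?r" for i
    using assms(2) unity_root_exponent[OF r root] unity_root_exponent_eq_0_iff[OF r root]
    by (auto simp: diag_exponent_eq fixdim_eq_0_iff)
  obtain k where k: "(\<Sum>i\<in>UNIV. ?a i) = ?r * k"
    using dvd_sum_unity_root_exponent[OF _ r root prod_diagonal[OF assms(1)]]
    by (auto simp: diag_exponent_eq)
  have "0 < ?r * k" "?r * k < ?r * 3"
    using k[unfolded sum_3] a_pos[of 1] a_less[of 1] a_less[of 2] a_less[of 3] by linarith+
  then have "k = 1 \<or> k = 2" by simp linarith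
  moreover have "age g = k" using k r by (simp add: age_def flip: of_nat_sum)
  moreover have "age (matrix_inv g) = 3 - k"
  proof -
    have "diag_exponent (matrix_inv g) i = ?r - ?a i" for i
      using unity_root_exponent_inverse[OF r root] assms
      by (simp add: diag_exponent_eq diag_order_inv inv_diagonal fixdim_eq_0_iff)
    then have "(\<Sum>i\<in>UNIV. diag_exponent (matrix_inv g) i) = ?r * (3 - k)"
      using k a_less[of 1] a_less[of 2] a_less[of 3] by (simp add: sum_3 diff_mult_distrib2)
    then show ?thesis using r \<open>k = 1 \<or> k = 2\<close>
      by (auto simp: age_def diag_order_inv assms simp flip: of_nat_sum)
  qed
  ultimately show thesis by (rule that)
qed

lemma card_fixed_point_free: "card {g\<in>G. fixdim g = 0} = 2 * j_G G"
proof -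
  define A1 where "A1 = {g\<in>G. age g = 1 \<and> fixdim g = 0}"
  define A2 where "A2 = {g\<in>G. age g \<noteq> 1 \<and> fixdim g = 0}"
  have fixdim_inv: "fixdim (matrix_inv g) = 0" if "g \<in> G" "fixdim g = 0" for g
    using that by (simp add: fixdim_eq_0_iff inv_diagonal)
  have age_inv: "age (matrix_inv g) = 1 \<longleftrightarrow> age g \<noteq> 1" if "g \<in> G" "fixdim g = 0" for g
    by (rule age_fixed_point_free[OF that]) auto
  have "bij_betw matrix_inv A1 A2"
  proof (rule bij_betw_byWitness[where f' = matrix_inv])
    show "matrix_inv ` A1 \<subseteq> A2" "matrix_inv ` A2 \<subseteq> A1"
      unfolding A1_def A2_def by (auto simp: inv fixdim_inv age_inv)
  qed (auto simp: A1_def A2_def inv_inv)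
  then have "card A2 = card A1" by (simp add: bij_betw_same_card)
  moreover have "{g\<in>G. fixdim g = 0} = A1 \<union> A2" "A1 \<inter> A2 = {}"
    unfolding A1_def A2_def by blast+
  moreover have "finite A1" "finite A2" using finite unfolding A1_def A2_def by simp_all
  ultimately show ?thesis by (simp add: card_Un_disjoint j_G_def A1_def)
qed

lemma K_sub_Int:
  assumes "i \<noteq> j"
  shows "K_sub G i \<inter> K_sub G j = {mat 1}"
proof -
  have "g = mat 1" if "g \<in> G" "g$i$i = 1" "g$j$j = 1" for g
  proof (rule eqI[OF that(1) one])
    fix k
    show "g$k$k = mat 1 $ k $ k"
    proof (cases "k = i \<or> k = j")
      case False
      then have "UNIV = {i, j, k}" using assms by (intro UNIV_3_distinct) auto
      then have "l = i \<or> l = j" if "l \<noteq> k" for l using that by (metis UNIV_I insertE empty_iff)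
      then have "(\<Prod>l\<in>UNIV - {k}. g$l$l) = 1" using that(2,3) by (intro prod.neutral) auto
      then have "g$k$k = g$k$k * (\<Prod>l\<in>UNIV - {k}. g$l$l)" by simp
      also have "\<dots> = (\<Prod>l\<in>UNIV. g$l$l)" by (rule prod.remove[symmetric]) simp_all
      also have "\<dots> = 1" by (rule prod_diagonal[OF that(1)])
      finally show ?thesis by (simp add: mat_def)
    qed (use that in \<open>auto simp: mat_def\<close>)
  qed
  moreover have "mat 1 \<in> K_sub G l" for l using one by (simp add: K_sub_def mat_def)
  ultimately show ?thesis unfolding K_sub_def by blast
qed

lemma Diff_one_decomposition:
  "G - {mat 1} = {g\<in>G. fixdim g = 0} \<union> (\<Union>i. K_sub G i - {mat 1})"
  by (auto simp: K_sub_def fixdim_eq_0_iff mat_def)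

end

theorem proposition1:
  fixes G :: "(complex^3^3) set"
  assumes "finite_diag_SL3_group G"
  shows "int (card G) = 1 + 2 * int (j_G G) + (\<Sum>i\<in>UNIV. (int (card (K_sub G i)) - 1))"
proof -
  interpret diag_SL3 G using assms by unfold_locales
  let ?F = "{g\<in>G. fixdim g = 0}" and ?K = "\<lambda>i. K_sub G i - {mat 1}"
  have finite_K: "finite (K_sub G i)" for i using finite by (simp add: K_sub_def)
  have card_K: "card (K_sub G i) = Suc (card (?K i))" for i
    using one by (intro card.remove finite_K) (simp add: K_sub_def mat_def)
  have "?K i \<inter> ?K j = {}" if "i \<noteq> j" for i j using K_sub_Int[OF that] by blast
  then have "card (\<Union>i. ?K i) = (\<Sum>i\<in>UNIV. card (?K i))"
    by (intro card_UN_disjoint) (simp_all add: finite_K)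
  moreover have "card (G - {mat 1}) = card ?F + card (\<Union>i. ?K i)"
    unfolding Diff_one_decomposition using finite finite_K
    by (intro card_Un_disjoint) (auto simp: K_sub_def fixdim_eq_0_iff)
  moreover have "card G = Suc (card (G - {mat 1}))" using finite one by (rule card.remove)
  ultimately have "card G = 1 + 2 * j_G G + (\<Sum>i\<in>UNIV. card (?K i))"
    by (simp add: card_fixed_point_free)
  then show ?thesis by (simp add: card_K)
qed

end
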